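(* Let $\rho>0$ be irrational and $p>0$. Suppose that complex numbers $a_{k,\ell,m}$, indexed by integers $k\ge1$, $\ell\ge m\ge0$ with $k\rho+\ell+1<p$, satisfy $$\sum_{\substack{k\ge1,\ \ell\ge m\ge0\\ k\rho+\ell+1<p}}a_{k,\ell,m}\frac{(\log n)^m}{n^{k\rho+\ell+1}}=\mathcal O(n^{-p})\quad(n\to\infty).$$ Then $a_{k,\ell,m}=0$ for all such triples $(k,\ell,m)$. *)

theory Defs
  imports "HOL-Analysis.Analysis" "HOL-Library.Landau_Symbols"
begin

definition idx_set :: "real \<Rightarrow> real \<Rightarrow> (nat \<times> nat \<times> nat) set" where
  "idx_set rho p = {(k, l, m). 1 \<le> k \<and> m \<le> l \<and> real k * rho + real l + 1 < p}"

end

theory Submission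
  imports Defs "HOL-Real_Asymp.Real_Asymp"
begin

text \<open>
  Among the triples with nonzero coefficient, take one whose exponent \<open>k\<rho> + l + 1\<close> is
  minimal and, among those, whose logarithmic power \<open>m\<close> is maximal. Since \<open>\<rho>\<close> is irrational,
  the exponent determines \<open>(k, l)\<close>, so this triple is unique and its term strictly dominates
  all the others, as well as \<open>n\<^sup>-\<^sup>p\<close>. The sum is then asymptotic to a nonzero multiple of
  that term, which contradicts the assumed bound \<open>O(n\<^sup>-\<^sup>p)\<close>.
\<close>

lemma sum_not_smallo_dominant_term:
  fixes f :: "'i \<Rightarrow> 'a \<Rightarrow> 'b::real_normed_field"
  assumes "finite I" and "i0 \<in> I" and "c i0 \<noteq> 0"
    and dominated: "\<And>i. i \<in> I - {i0} \<Longrightarrow> c i \<noteq> 0 \<Longrightarrow> f i \<in> o[F](f i0)"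
    and "eventually (\<lambda>x. f i0 x \<noteq> 0) F" and "F \<noteq> bot"
  shows "(\<lambda>x. \<Sum>i\<in>I. c i * f i x) \<notin> o[F](f i0)"
proof
  assume sum_smallo: "(\<lambda>x. \<Sum>i\<in>I. c i * f i x) \<in> o[F](f i0)"
  have rest_smallo: "(\<lambda>x. \<Sum>i\<in>I - {i0}. c i * f i x) \<in> o[F](f i0)"
  proof (rule big_sum_in_smallo)
    fix i assume "i \<in> I - {i0}"
    then show "(\<lambda>x. c i * f i x) \<in> o[F](f i0)"
      using dominated by (cases "c i = 0") auto
  qed
  have "(\<lambda>x. c i0 * f i0 x) = (\<lambda>x. (\<Sum>i\<in>I. c i * f i x) - (\<Sum>i\<in>I - {i0}. c i * f i x))"
    using assms(1,2) by (simp add: sum.remove)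
  also have "\<dots> \<in> o[F](f i0)"
    using sum_smallo rest_smallo by (rule sum_in_smallo(2))
  finally have "(\<lambda>x. c i0 * f i0 x) \<in> o[F](f i0)" .
  with \<open>c i0 \<noteq> 0\<close> have "eventually (\<lambda>x. f i0 x = 0) F"
    by (simp add: landau_o.small_refl_iff)
  with assms(5,6) show False
    by (auto dest: eventually_conj simp: eventually_False)
qed

lemma finite_lexicographic_extremum:
  fixes e :: "'a \<Rightarrow> 'b::linorder" and m :: "'a \<Rightarrow> 'c::linorder"
  assumes "finite S" and "S \<noteq> {}" and inj: "inj_on (\<lambda>t. (e t, m t)) S"
  obtains t0 where "t0 \<in> S" and "\<And>t. t \<in> S - {t0} \<Longrightarrow> e t0 < e t \<or> (e t = e t0 \<and> m t < m t0)"
proof -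
  define S0 where "S0 = {t \<in> S. e t = Min (e ` S)}"
  have "Min (e ` S) \<in> e ` S"
    using assms(1,2) by simp
  then have "finite S0" and "S0 \<noteq> {}"
    using assms(1) by (auto simp: S0_def)
  then have "Max (m ` S0) \<in> m ` S0"
    by simp
  then obtain t0 where t0: "t0 \<in> S0" "m t0 = Max (m ` S0)"
    by auto
  have "e t0 < e t \<or> (e t = e t0 \<and> m t < m t0)" if t: "t \<in> S - {t0}" for t
  proof (cases "t \<in> S0")
    case True
    then have "m t \<le> m t0" and "e t = e t0"
      using t0 \<open>finite S0\<close> by (auto simp: S0_def)
    moreover have "(e t, m t) \<noteq> (e t0, m t0)"
      using inj t t0 by (auto simp: S0_def inj_on_def)
    ultimately show ?thesis by auto
  next
    case False
    then show ?thesis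
      using t t0 assms(1) by (auto simp: S0_def order.not_eq_order_implies_strict)
  qed
  with t0 show ?thesis using that by (auto simp: S0_def)
qed

lemma irrational_nat_combination_eq_iff:
  fixes rho :: real
  assumes "rho \<notin> \<rat>"
  shows "real k * rho + real l = real k' * rho + real l' \<longleftrightarrow> k = k' \<and> l = l'"
proof
  assume eq: "real k * rho + real l = real k' * rho + real l'"
  have "k = k'"
  proof (rule ccontr)
    assume "k \<noteq> k'"
    with eq have "rho = (real l' - real l) / (real k - real k')"
      by (simp add: field_simps)
    also have "\<dots> \<in> \<rat>" by simp
    finally show False using assms by simp
  qed
  with eq show "k = k' \<and> l = l'" by simp
qed simp

definition log_power_term :: "nat \<Rightarrow> real \<Rightarrow> nat \<Rightarrow> complex" where
  "log_power_term m e n = complex_of_real (ln (real n) ^ m / real n powr e)"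

lemma log_power_term_smallo:
  assumes "e < e' \<or> (e = e' \<and> m < m')"
  shows "log_power_term m e' \<in> o(log_power_term m' e)"
proof -
  have "(\<lambda>n::nat. ln (real n) ^ m / real n powr e') \<in> o(\<lambda>n. ln (real n) ^ m' / real n powr e)"
  proof (cases "e < e'")
    case True
    define d where "d = e' - e"
    have "d > 0" and "e' = e + d"
      using True by (auto simp: d_def)
    then show ?thesis by real_asymp
  next
    case False
    with assms show ?thesis by real_asymp
  qed
  then show ?thesis
    unfolding log_power_term_def landau_o.small.of_real_iff .
qed

lemma eventually_log_power_term_nonzero:
  "eventually (\<lambda>n. log_power_term m e n \<noteq> 0) sequentially"
  using eventually_ge_at_top[of 2] by eventually_elim (simp add: log_power_term_def)

lemma log_power_term_zero_eq_powr:
  "log_power_term 0 p = (\<lambda>n. complex_of_real (real n powr (- p)))"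
  by (simp add: log_power_term_def powr_minus_divide fun_eq_iff)

lemma finite_idx_set:
  assumes "rho > 0"
  shows "finite (idx_set rho p)"
proof -
  define N where "N = nat \<lceil>p / rho\<rceil> + nat \<lceil>p\<rceil>"
  have "(k, l, m) \<in> {..N} \<times> {..N} \<times> {..N}" if "(k, l, m) \<in> idx_set rho p" for k l m
  proof -
    from that have "m \<le> l" and bound: "real k * rho + real l + 1 < p"
      by (auto simp: idx_set_def)
    have "real k * rho \<ge> 0"
      using assms by simp
    with bound have "real k < p / rho" and "real l < p"
      using assms by (simp add: pos_less_divide_eq, linarith)
    then have "k \<le> nat \<lceil>p / rho\<rceil>" and "l \<le> nat \<lceil>p\<rceil>"
      by linarith+
    with \<open>m \<le> l\<close> show ?thesis
      by (auto simp: N_def)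
  qed
  then have "idx_set rho p \<subseteq> {..N} \<times> {..N} \<times> {..N}"
    by auto
  then show ?thesis
    by (rule finite_subset) simp
qed

theorem lemma4p4:
  fixes rho p :: real and a :: "nat \<Rightarrow> nat \<Rightarrow> nat \<Rightarrow> complex"
  assumes "rho > 0" and "rho \<notin> \<rat>" and "p > 0"
    and "(\<lambda>n::nat. \<Sum>(k, l, m)\<in>idx_set rho p.
            a k l m * complex_of_real ((ln (real n)) ^ m / real n powr (real k * rho + real l + 1)))
         \<in> O(\<lambda>n. complex_of_real (real n powr (- p)))"
  shows "\<forall>(k, l, m)\<in>idx_set rho p. a k l m = 0"
proof (rule ccontr)
  define E where "E = (\<lambda>(k::nat, l::nat, m::nat). real k * rho + real l + 1)"
  define f where "f = (\<lambda>t. log_power_term (snd (snd t)) (E t))"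
  define c where "c = (\<lambda>(k, l, m). a k l m)"
  define S where "S = {t \<in> idx_set rho p. c t \<noteq> 0}"
  assume some_nonzero: "\<not> (\<forall>(k, l, m)\<in>idx_set rho p. a k l m = 0)"
  have "finite S" using finite_idx_set[OF assms(1)] by (simp add: S_def)
  moreover from some_nonzero have "S \<noteq> {}" by (auto simp: S_def c_def)
  moreover have "inj_on (\<lambda>t. (E t, snd (snd t))) S"
    using irrational_nat_combination_eq_iff[OF assms(2)] by (auto simp: inj_on_def E_def)
  ultimately obtain t0 where "t0 \<in> S"
    and extremal: "\<And>t. t \<in> S - {t0} \<Longrightarrow> E t0 < E t \<or> (E t = E t0 \<and> snd (snd t) < snd (snd t0))"
    using finite_lexicographic_extremum[of S E "\<lambda>t. snd (snd t)"] by blast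
  then have "t0 \<in> idx_set rho p" and "c t0 \<noteq> 0" and "E t0 < p"
    by (auto simp: S_def idx_set_def E_def)
  have "(\<lambda>n. complex_of_real (real n powr (- p))) \<in> o(f t0)"
    using log_power_term_smallo[of "E t0" p 0] \<open>E t0 < p\<close>
    by (simp add: f_def log_power_term_zero_eq_powr)
  moreover have "(\<lambda>n. \<Sum>t\<in>idx_set rho p. c t * f t n) = (\<lambda>n. \<Sum>(k, l, m)\<in>idx_set rho p.
      a k l m * complex_of_real ((ln (real n)) ^ m / real n powr (real k * rho + real l + 1)))"
    by (simp add: c_def f_def E_def log_power_term_def case_prod_beta)
  ultimately have "(\<lambda>n. \<Sum>t\<in>idx_set rho p. c t * f t n) \<in> o(f t0)"
    using assms(4) by (simp add: landau_o.big_small_trans)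
  moreover have "f t \<in> o(f t0)" if "t \<in> idx_set rho p - {t0}" and "c t \<noteq> 0" for t
    using that extremal[of t] log_power_term_smallo by (auto simp: S_def f_def)
  then have "(\<lambda>n. \<Sum>t\<in>idx_set rho p. c t * f t n) \<notin> o(f t0)"
    using finite_idx_set[OF assms(1)] \<open>t0 \<in> idx_set rho p\<close> \<open>c t0 \<noteq> 0\<close>
      eventually_log_power_term_nonzero
    by (intro sum_not_smallo_dominant_term) (auto simp: f_def)
  ultimately show False by contradiction
qed

end
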